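(* Let $m\ge3$ be odd and $n\ge2$. Every completely positive tensor $\mathcal{A}\in S_{m,n}$ is strongly positive semi-definite. Furthermore, suppose $\mathcal{A}=\sum_{l=1}^r(\mathbf{u}^{(l)})^m$ with nonnegative vectors $\mathbf{u}^{(1)},\dots,\mathbf{u}^{(r)}\in\mathbb{R}^n$, and for each $i\in\{1,\dots,n\}$ let $\Gamma_i=\{l\in\{1,\dots,r\}: u^{(l)}_i\ne 0\}$. If the vectors $\{\mathbf{u}^{(l)}: l\in\Gamma_i\}$ span $\mathbb{R}^n$ (i.e. the matrix with these columns has rank $n$) for every $i\in\{1,\dots,n\}$, then $\mathcal{A}$ is strongly positive definite.
   Context: $S_{m,n}$ is the set of real symmetric $m$th order $n$-dimensional tensors. For $\mathbf{u}\in\mathbb{R}^n$, $\mathbf{u}^m$ is the tensor with entries $u_{i_1}\cdots u_{i_m}$. A tensor is completely positive if it equals $\sum_{l=1}^r(\mathbf{u}^{(l)})^m$ for some positive integer $r$ and nonnegative vectors $\mathbf{u}^{(l)}\in\mathbb{R}^n$. For $\mathbf{x}\in\mathbb{R}^n$, $\mathcal{A}\mathbf{x}^{m-1}$ is the vector with $i$th component $\sum_{i_2,\dots,i_m}a_{ii_2\dots i_m}x_{i_2}\cdots x_{i_m}$. For odd $m$, $\mathcal{A}\in S_{m,n}$ is strongly positive semi-definite if $\mathcal{A}\mathbf{x}^{m-1}\ge\mathbf{0}$ componentwise for all $\mathbf{x}\in\mathbb{R}^n$, and strongly positive definite if $\mathcal{A}\mathbf{x}^{m-1}>\mathbf{0}$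 componentwise for all nonzero $\mathbf{x}$. *)

theory Defs
  imports "HOL-Analysis.Analysis"
begin

text \<open>A real m-th order tensor of dimension n = CARD('n) is a function from
index lists (i_1,...,i_m) to reals; only lists of length m are meaningful.\<close>

type_synonym 'n tensor = "'n list \<Rightarrow> real"

definition symmetric_tensor :: "nat \<Rightarrow> 'n tensor \<Rightarrow> bool" where
  "symmetric_tensor m A \<longleftrightarrow>
     (\<forall>is js. length is = m \<and> length js = m \<and> mset is = mset js \<longrightarrow> A is = A js)"

definition tensor_power :: "real ^ 'n \<Rightarrow> 'n tensor" where
  "tensor_power u = (\<lambda>is. prod_list (map (\<lambda>i. u $ i) is))"

definition cp_decomposition :: "nat \<Rightarrow> 'n tensor \<Rightarrow> nat \<Rightarrow> (nat \<Rightarrow> real ^ 'n) \<Rightarrow> bool" where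
  "cp_decomposition m A r us \<longleftrightarrow>
     0 < r \<and> (\<forall>l<r. \<forall>i. 0 \<le> us l $ i) \<and>
     (\<forall>is. length is = m \<longrightarrow> A is = (\<Sum>l<r. tensor_power (us l) is))"

definition completely_positive :: "nat \<Rightarrow> 'n::finite tensor \<Rightarrow> bool" where
  "completely_positive m A \<longleftrightarrow> (\<exists>r us. cp_decomposition m A r us)"

definition tensor_apply :: "nat \<Rightarrow> 'n::finite tensor \<Rightarrow> real ^ 'n \<Rightarrow> real ^ 'n" where
  "tensor_apply m A x = (\<chi> i. \<Sum>is\<in>{is. length is = m - 1}.
       A (i # is) * prod_list (map (\<lambda>j. x $ j) is))"

definition strongly_psd :: "nat \<Rightarrow> 'n::finite tensor \<Rightarrow> bool" where
  "strongly_psd m A \<longleftrightarrow> (\<forall>x. \<forall>i. 0 \<le> tensor_apply m A x $ i)"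

definition strongly_pd :: "nat \<Rightarrow> 'n::finite tensor \<Rightarrow> bool" where
  "strongly_pd m A \<longleftrightarrow> (\<forall>x. x \<noteq> 0 \<longrightarrow> (\<forall>i. 0 < tensor_apply m A x $ i))"

end

theory Submission
  imports Defs
begin

text \<open>If A = sum over l of u_l^m, then A x^(m-1) = sum over l of (u_l \<bullet> x)^(m-1) u_l.
  For odd m the exponent m - 1 is even, so with nonnegative u_l every component is a sum of
  nonnegative terms. The i-th component is even positive once some u_l with (u_l)_i \<noteq> 0 is
  not orthogonal to x, and for x \<noteq> 0 such a u_l exists when these vectors span the space.\<close>

lemma sum_prod_list_lists_length_eq:
  fixes f :: "'a \<Rightarrow> 'b::comm_semiring_1"
  assumes "finite A"
  shows "(\<Sum>xs\<in>{xs. set xs \<subseteq> A \<and> length xs = k}. prod_list (map f xs)) = (\<Sum>a\<in>A. f a) ^ k"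
proof (induction k)
  case 0
  have "{xs. set xs \<subseteq> A \<and> length xs = 0} = {[]}"
    by auto
  then show ?case by simp
next
  case (Suc k)
  have "(\<Sum>xs\<in>{xs. set xs \<subseteq> A \<and> length xs = Suc k}. prod_list (map f xs))
      = (\<Sum>(xs, a)\<in>{xs. set xs \<subseteq> A \<and> length xs = k} \<times> A. f a * prod_list (map f xs))"
    unfolding lists_length_Suc_eq by (subst sum.reindex[OF inj_split_Cons]) (simp add: case_prod_beta)
  also have "\<dots> = (\<Sum>a\<in>A. f a) * (\<Sum>a\<in>A. f a) ^ k"
    by (simp add: sum.cartesian_product[symmetric] sum_product Suc[symmetric] sum.swap[of _ A])
  finally show ?case by simp
qed

lemma prod_list_map_mult:
  fixes f g :: "'a \<Rightarrow> 'b::comm_monoid_mult"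
  shows "prod_list (map f xs) * prod_list (map g xs) = prod_list (map (\<lambda>a. f a * g a) xs)"
  by (induction xs) (simp_all add: ac_simps)

lemma tensor_apply_tensor_power:
  "tensor_apply m (tensor_power u) x = (u \<bullet> x) ^ (m - 1) *\<^sub>R u"
proof -
  have "tensor_apply m (tensor_power u) x $ i
      = u $ i * (\<Sum>xs\<in>{xs. length xs = m - 1}. prod_list (map (\<lambda>j. u $ j * x $ j) xs))"
    for i
    by (simp add: tensor_apply_def tensor_power_def sum_distrib_left prod_list_map_mult mult.assoc)
  also have "\<dots> i = u $ i * (u \<bullet> x) ^ (m - 1)" for i
    using sum_prod_list_lists_length_eq[of UNIV "\<lambda>j. u $ j * x $ j" "m - 1"]
    by (simp add: inner_vec_def)
  finally show ?thesis
    by (simp add: vec_eq_iff)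
qed

lemma tensor_apply_cong:
  assumes "1 \<le> m" and "\<And>xs. length xs = m \<Longrightarrow> A xs = B xs"
  shows "tensor_apply m A = tensor_apply m B"
  using assms unfolding tensor_apply_def by (auto simp: vec_eq_iff intro!: ext sum.cong)

lemma tensor_apply_sum:
  "tensor_apply m (\<lambda>xs. \<Sum>l\<in>L. T l xs) x = (\<Sum>l\<in>L. tensor_apply m (T l) x)"
  by (simp add: vec_eq_iff tensor_apply_def sum_distrib_right sum.swap[of _ L])

lemma tensor_apply_cp_decomposition:
  assumes "cp_decomposition m A r us" and "1 \<le> m"
  shows "tensor_apply m A x = (\<Sum>l<r. (us l \<bullet> x) ^ (m - 1) *\<^sub>R us l)"
proof -
  have "tensor_apply m A = tensor_apply m (\<lambda>xs. \<Sum>l<r. tensor_power (us l) xs)"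
    using assms unfolding cp_decomposition_def by (intro tensor_apply_cong) auto
  then show ?thesis
    by (simp add: tensor_apply_sum tensor_apply_tensor_power)
qed

lemma strongly_psd_if_cp_decomposition:
  assumes "odd m" and "cp_decomposition m A r us"
  shows "strongly_psd m A"
  unfolding strongly_psd_def
proof (intro allI)
  fix x i
  have "even (m - 1)" and "1 \<le> m"
    using \<open>odd m\<close> odd_pos[OF \<open>odd m\<close>] by auto
  with assms(2) show "0 \<le> tensor_apply m A x $ i"
    unfolding cp_decomposition_def
    by (auto simp: tensor_apply_cp_decomposition[OF assms(2)]
             intro!: sum_nonneg mult_nonneg_nonneg zero_le_even_power)
qed

lemma spanning_set_not_orthogonal:
  fixes x :: "'a::real_inner"
  assumes "span S = UNIV" and "x \<noteq> 0"
  obtains y where "y \<in> S" and "y \<bullet> x \<noteq> 0"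
proof -
  have "\<not> orthogonal x x"
    using \<open>x \<noteq> 0\<close> by (simp add: orthogonal_def)
  then have "\<exists>y\<in>S. \<not> orthogonal x y"
    using orthogonal_to_span[of x S x] \<open>span S = UNIV\<close> by blast
  then show thesis
    using that by (auto simp: orthogonal_def inner_commute)
qed

lemma strongly_pd_if_cp_decomposition_spanning:
  fixes us :: "nat \<Rightarrow> real ^ 'n::finite"
  assumes "odd m" and decomp: "cp_decomposition m A r us"
    and spanning: "\<And>i. span {us l | l. l < r \<and> us l $ i \<noteq> 0} = UNIV"
  shows "strongly_pd m A"
  unfolding strongly_pd_def
proof (intro allI impI)
  fix x :: "real ^ 'n" and i
  assume "x \<noteq> 0"
  have "even (m - 1)" and "1 \<le> m"
    using \<open>odd m\<close> odd_pos[OF \<open>odd m\<close>] by auto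
  have nonneg: "0 \<le> us l $ j" if "l < r" for l j
    using decomp that unfolding cp_decomposition_def by blast
  obtain l where "l < r" "us l $ i \<noteq> 0" "us l \<bullet> x \<noteq> 0"
    using spanning_set_not_orthogonal[OF spanning \<open>x \<noteq> 0\<close>] by blast
  then have "0 < (us l \<bullet> x) ^ (m - 1) * us l $ i"
    using nonneg[of l i] \<open>even (m - 1)\<close>
    by (simp add: order_less_le zero_le_even_power)
  then have "0 < (\<Sum>l<r. (us l \<bullet> x) ^ (m - 1) * us l $ i)"
    using \<open>l < r\<close> nonneg \<open>even (m - 1)\<close>
    by (intro sum_pos2[of _ l]) (auto intro!: mult_nonneg_nonneg zero_le_even_power)
  then show "0 < tensor_apply m A x $ i"
    by (simp add: tensor_apply_cp_decomposition[OF decomp \<open>1 \<le> m\<close>])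
qed

theorem theorem3p4:
  fixes m :: nat and A :: "'n::finite tensor"
  assumes "odd m" and "m \<ge> 3" and "CARD('n) \<ge> 2"
    and "symmetric_tensor m A"
  shows "(completely_positive m A \<longrightarrow> strongly_psd m A) \<and>
         (\<forall>r us. cp_decomposition m A r us \<and>
            (\<forall>i. span {us l | l. l < r \<and> us l $ i \<noteq> 0} = UNIV)
            \<longrightarrow> strongly_pd m A)"
  using strongly_psd_if_cp_decomposition[OF \<open>odd m\<close>]
    strongly_pd_if_cp_decomposition_spanning[OF \<open>odd m\<close>]
  unfolding completely_positive_def by blast

end
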